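(* Let $S$ be a commutative ring, $a,b,c,d\in S$, and let $R$ be an $S$-algebra such that $2$ is a regular element of $R$ and $2$ is either a prime element or a unit of $R$. Then $$\operatorname{Iso}_S((a,b),(c,d))(R)\simeq\{w\in R^\times: a^2-4b=w^2(c^2-4d)\}.$$ In particular, $R[x]/\langle x^2+ax+b\rangle\simeq R[y]/\langle y^2+cy+d\rangle$ as $R$-algebras if and only if $a^2-4b=w^2(c^2-4d)$ for some $w\in R^\times$.
   Context: $\operatorname{Iso}_S((a,b),(c,d))(R)$ denotes the set of $R$-algebra isomorphisms $R[x]/\langle x^2+ax+b\rangle\to R[y]/\langle y^2+cy+d\rangle$, where elements of $S$ are identified with their images in $R$. All rings are commutative and unitary. *)

theory Defs
  imports "HOL-Computational_Algebra.Factorial_Ring"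
begin

text \<open>The free R-algebra R[x]/(x^2 + a x + b), modelled on R x R via the
R-basis {1, x}: the pair (u, v) stands for u + v x.  Multiplication uses
x^2 = - a x - b.\<close>

definition quad_mult :: "'r::comm_ring_1 \<Rightarrow> 'r \<Rightarrow> 'r \<times> 'r \<Rightarrow> 'r \<times> 'r \<Rightarrow> 'r \<times> 'r" where
  "quad_mult a b p q =
     (fst p * fst q - b * (snd p * snd q),
      fst p * snd q + snd p * fst q - a * (snd p * snd q))"

definition quad_add :: "'r::comm_ring_1 \<times> 'r \<Rightarrow> 'r \<times> 'r \<Rightarrow> 'r \<times> 'r" where
  "quad_add p q = (fst p + fst q, snd p + snd q)"

definition quad_smult :: "'r::comm_ring_1 \<Rightarrow> 'r \<times> 'r \<Rightarrow> 'r \<times> 'r" where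
  "quad_smult r p = (r * fst p, r * snd p)"

definition quad_alg_hom :: "'r::comm_ring_1 \<Rightarrow> 'r \<Rightarrow> 'r \<Rightarrow> 'r \<Rightarrow> ('r \<times> 'r \<Rightarrow> 'r \<times> 'r) \<Rightarrow> bool" where
  "quad_alg_hom a b c d f \<longleftrightarrow>
     (\<forall>p q. f (quad_add p q) = quad_add (f p) (f q)) \<and>
     (\<forall>r p. f (quad_smult r p) = quad_smult r (f p)) \<and>
     (\<forall>p q. f (quad_mult a b p q) = quad_mult c d (f p) (f q)) \<and>
     f (1, 0) = (1, 0)"

definition quad_Iso :: "'r::comm_ring_1 \<Rightarrow> 'r \<Rightarrow> 'r \<Rightarrow> 'r \<Rightarrow> ('r \<times> 'r \<Rightarrow> 'r \<times> 'r) set" where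
  "quad_Iso a b c d = {f. quad_alg_hom a b c d f \<and> bij f}"

definition is_ring_hom :: "('s::comm_ring_1 \<Rightarrow> 'r::comm_ring_1) \<Rightarrow> bool" where
  "is_ring_hom \<phi> \<longleftrightarrow> \<phi> 1 = 1 \<and> (\<forall>x y. \<phi> (x + y) = \<phi> x + \<phi> y) \<and> (\<forall>x y. \<phi> (x * y) = \<phi> x * \<phi> y)"

end

theory Submission
  imports Defs
begin

text \<open>An R-algebra homomorphism R[x]/(x^2+ax+b) \<rightarrow> R[y]/(y^2+cy+d) is determined by the
image s + t y of x, and s + t y must be a root of x^2+ax+b; it is bijective exactly when t is
a unit.  For a unit t the root condition forces 2s = ct - a, and then it amounts to
a^2 - 4b = t^2 (c^2 - 4d).  Regularity of 2 makes s unique, so f \<mapsto> t is injective; for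
surjectivity, the discriminant equation gives (ct - a)^2 \<in> 2R, so 2 divides ct - a when 2 is
prime or a unit, and s can be chosen.\<close>

definition quad_map :: "'r::comm_ring_1 \<Rightarrow> 'r \<Rightarrow> 'r \<times> 'r \<Rightarrow> 'r \<times> 'r" where
  "quad_map s t p = (fst p + snd p * s, snd p * t)"

lemma quad_map_x [simp]: "quad_map s t (0, 1) = (s, t)"
  by (simp add: quad_map_def)

lemma quad_alg_hom_eq_quad_map:
  assumes "quad_alg_hom a b c d f"
  shows "f = quad_map (fst (f (0, 1))) (snd (f (0, 1)))"
proof
  fix p :: "'a \<times> 'a"
  have "p = quad_add (quad_smult (fst p) (1, 0)) (quad_smult (snd p) (0, 1))"
    by (simp add: quad_add_def quad_smult_def)
  then have "f p = quad_add (quad_smult (fst p) (f (1, 0))) (quad_smult (snd p) (f (0, 1)))"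
    using assms unfolding quad_alg_hom_def by metis
  then show "f p = quad_map (fst (f (0, 1))) (snd (f (0, 1))) p"
    using assms by (simp add: quad_alg_hom_def quad_add_def quad_smult_def quad_map_def)
qed

lemma quad_alg_hom_quad_map_iff:
  fixes a b c d s t :: "'r::comm_ring_1"
  shows "quad_alg_hom a b c d (quad_map s t) \<longleftrightarrow>
           s * s - d * (t * t) = - b - a * s \<and> t * (2 * s - c * t + a) = 0"
proof
  assume "quad_alg_hom a b c d (quad_map s t)"
  moreover have "quad_mult a b (0, 1) (0, 1) = (- b, - a)"
    by (simp add: quad_mult_def)
  ultimately have "quad_map s t (- b, - a) = quad_mult c d (s, t) (s, t)"
    unfolding quad_alg_hom_def by (metis quad_map_x)
  then show "s * s - d * (t * t) = - b - a * s \<and> t * (2 * s - c * t + a) = 0"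
    by (simp add: quad_map_def quad_mult_def algebra_simps)
next
  assume "s * s - d * (t * t) = - b - a * s \<and> t * (2 * s - c * t + a) = 0"
  then have root: "s * s - d * (t * t) + b + a * s = 0" and lin: "t * (2 * s - c * t + a) = 0"
    by (simp_all add: algebra_simps)
  have "quad_map s t (quad_mult a b (u, v) (u', v'))
      = quad_mult c d (quad_map s t (u, v)) (quad_map s t (u', v'))" for u v u' v' :: 'r
  proof -
    have "fst (quad_mult c d (quad_map s t (u, v)) (quad_map s t (u', v')))
          - fst (quad_map s t (quad_mult a b (u, v) (u', v')))
        = v * v' * (s * s - d * (t * t) + b + a * s)"
      "snd (quad_mult c d (quad_map s t (u, v)) (quad_map s t (u', v')))
          - snd (quad_map s t (quad_mult a b (u, v) (u', v')))
        = v * v' * (t * (2 * s - c * t + a))"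
      by (simp_all add: quad_map_def quad_mult_def algebra_simps)
    then show ?thesis
      by (simp add: root lin prod_eq_iff)
  qed
  then show "quad_alg_hom a b c d (quad_map s t)"
    unfolding quad_alg_hom_def
    by (simp add: quad_map_def quad_add_def quad_smult_def algebra_simps split_paired_all)
qed

lemma bij_quad_map_iff: "bij (quad_map s t) \<longleftrightarrow> t dvd 1"
proof
  assume "bij (quad_map s t)"
  then obtain p where "quad_map s t p = (0, 1)"
    by (metis bij_pointE)
  then have "snd p * t = 1"
    by (simp add: quad_map_def)
  then show "t dvd 1"
    by (metis dvd_triv_right)
next
  assume "t dvd 1"
  then obtain t' where t': "1 = t * t'"
    by (rule dvdE)
  let ?g = "quad_map (- t' * s) t'"
  have "quad_map s t (?g p) = p" "?g (quad_map s t p) = p" for p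
  proof -
    have "snd p * t' * t = snd p" "snd p * t * t' = snd p"
      by (simp_all add: t'[symmetric] mult.assoc mult.commute[of t'])
    then show "quad_map s t (?g p) = p" "?g (quad_map s t p) = p"
      by (simp_all add: quad_map_def algebra_simps)
  qed
  then show "bij (quad_map s t)"
    by (intro o_bij[of ?g]) (simp_all add: fun_eq_iff)
qed

lemma unit_mult_eq_0_iff:
  fixes t x :: "'r::comm_semiring_1"
  assumes "t dvd 1"
  shows "t * x = 0 \<longleftrightarrow> x = 0"
proof -
  obtain t' where "1 = t * t'"
    using assms by (rule dvdE)
  then show ?thesis
    by (metis mult.assoc mult.commute mult_1_left mult_zero_right)
qed

lemma root_iff_discriminant_eq:
  fixes a b c d s t :: "'r::comm_ring_1"
  assumes regular: "\<forall>r::'r. 2 * r = 0 \<longrightarrow> r = 0" and unit: "t dvd 1"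
  shows "(s * s - d * (t * t) = - b - a * s \<and> t * (2 * s - c * t + a) = 0) \<longleftrightarrow>
           2 * s = c * t - a \<and> a ^ 2 - 4 * b = t ^ 2 * (c ^ 2 - 4 * d)"
proof -
  have "2 * s - c * t + a = 0 \<longleftrightarrow> 2 * s = c * t - a"
    by (simp add: diff_add_eq diff_eq_eq eq_diff_eq)
  then have lin: "t * (2 * s - c * t + a) = 0 \<longleftrightarrow> 2 * s = c * t - a"
    using unit_mult_eq_0_iff[OF unit] by blast
  define X where "X = s * s - d * (t * t) + b + a * s"
  have "(s * s - d * (t * t)) - (- b - a * s) = X"
    by (simp add: X_def algebra_simps)
  then have "s * s - d * (t * t) = - b - a * s \<longleftrightarrow> X = 0"
    by (metis eq_iff_diff_eq_0)
  moreover have "X = 0 \<longleftrightarrow> 2 * (2 * X) = 0"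
    using regular by auto
  ultimately have root: "s * s - d * (t * t) = - b - a * s \<longleftrightarrow> 2 * (2 * X) = 0"
    by blast
  have "(t ^ 2 * (c ^ 2 - 4 * d) - (a ^ 2 - 4 * b)) - 2 * (2 * X)
      = (c * t - a - 2 * s) * (2 * s + a + c * t)"
    by (simp add: X_def algebra_simps power2_eq_square)
  then have "2 * s = c * t - a \<Longrightarrow> 2 * (2 * X) = t ^ 2 * (c ^ 2 - 4 * d) - (a ^ 2 - 4 * b)"
    by simp
  then have "2 * s = c * t - a \<Longrightarrow> 2 * (2 * X) = 0 \<longleftrightarrow> a ^ 2 - 4 * b = t ^ 2 * (c ^ 2 - 4 * d)"
    by (metis eq_iff_diff_eq_0)
  with lin root show ?thesis
    by blast
qed

lemma two_dvd_of_discriminant_eq: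
  fixes a b c d w :: "'r::comm_ring_1"
  assumes prime_or_unit: "prime_elem (2::'r) \<or> (2::'r) dvd 1"
    and discr: "a ^ 2 - 4 * b = w ^ 2 * (c ^ 2 - 4 * d)"
  shows "2 dvd c * w - a"
  using prime_or_unit
proof
  assume prime: "prime_elem (2::'r)"
  have "(c * w - a) ^ 2 - 2 * (2 * (d * w ^ 2 - b) + a * (a - c * w))
      = w ^ 2 * (c ^ 2 - 4 * d) - (a ^ 2 - 4 * b)"
    by (simp add: algebra_simps power2_eq_square)
  then have "(c * w - a) ^ 2 = 2 * (2 * (d * w ^ 2 - b) + a * (a - c * w))"
    using discr by simp
  then have "2 dvd (c * w - a) ^ 2"
    by (simp only: dvd_triv_left)
  then show ?thesis
    by (rule prime_elem_dvd_power[OF prime])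
qed (rule dvd_trans[OF _ one_dvd])

lemma mem_quad_Iso_iff:
  fixes a b c d :: "'r::comm_ring_1"
  assumes regular: "\<forall>r::'r. 2 * r = 0 \<longrightarrow> r = 0"
  shows "f \<in> quad_Iso a b c d \<longleftrightarrow>
           (\<exists>s t. f = quad_map s t \<and> t dvd 1 \<and> 2 * s = c * t - a \<and>
                  a ^ 2 - 4 * b = t ^ 2 * (c ^ 2 - 4 * d))"
proof -
  have quad_map_mem: "quad_map s t \<in> quad_Iso a b c d \<longleftrightarrow>
          t dvd 1 \<and> 2 * s = c * t - a \<and> a ^ 2 - 4 * b = t ^ 2 * (c ^ 2 - 4 * d)" for s t
  proof (cases "t dvd 1")
    case True
    then show ?thesis
      using root_iff_discriminant_eq[OF regular True, of s d b a c]
      by (simp add: quad_Iso_def quad_alg_hom_quad_map_iff bij_quad_map_iff)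
  qed (simp add: quad_Iso_def bij_quad_map_iff)
  show ?thesis
  proof
    assume "f \<in> quad_Iso a b c d"
    then have "f = quad_map (fst (f (0, 1))) (snd (f (0, 1)))"
      unfolding quad_Iso_def by (blast intro: quad_alg_hom_eq_quad_map)
    with \<open>f \<in> quad_Iso a b c d\<close>
    show "\<exists>s t. f = quad_map s t \<and> t dvd 1 \<and> 2 * s = c * t - a \<and>
                 a ^ 2 - 4 * b = t ^ 2 * (c ^ 2 - 4 * d)"
      using quad_map_mem by metis
  qed (use quad_map_mem in blast)
qed

theorem bij_betw_quad_Iso_discriminant_units:
  fixes a b c d :: "'r::comm_ring_1"
  assumes regular: "\<forall>r::'r. 2 * r = 0 \<longrightarrow> r = 0"
    and prime_or_unit: "prime_elem (2::'r) \<or> (2::'r) dvd 1"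
  shows "bij_betw (\<lambda>f. snd (f (0, 1))) (quad_Iso a b c d)
           {w. w dvd 1 \<and> a ^ 2 - 4 * b = w ^ 2 * (c ^ 2 - 4 * d)}"
proof (rule bij_betw_imageI)
  show "inj_on (\<lambda>f. snd (f (0, 1))) (quad_Iso a b c d)"
  proof (rule inj_onI)
    fix f g
    assume "f \<in> quad_Iso a b c d" "g \<in> quad_Iso a b c d" "snd (f (0, 1)) = snd (g (0, 1))"
    then obtain s s' t where f: "f = quad_map s t" and g: "g = quad_map s' t"
      and "2 * s = c * t - a" "2 * s' = c * t - a"
      unfolding mem_quad_Iso_iff[OF regular] by auto
    then have "2 * (s - s') = 0"
      by (simp add: right_diff_distrib)
    then have "s - s' = 0"
      by (rule regular[rule_format])
    then have "s = s'"
      by simp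
    then show "f = g"
      using f g by simp
  qed
  show "(\<lambda>f. snd (f (0, 1))) ` quad_Iso a b c d
      = {w. w dvd 1 \<and> a ^ 2 - 4 * b = w ^ 2 * (c ^ 2 - 4 * d)}"
  proof (intro equalityI subsetI)
    fix w
    assume "w \<in> (\<lambda>f. snd (f (0, 1))) ` quad_Iso a b c d"
    then obtain f where f: "f \<in> quad_Iso a b c d" and w: "w = snd (f (0, 1))"
      by blast
    from f obtain s t where "f = quad_map s t" "t dvd 1" "a ^ 2 - 4 * b = t ^ 2 * (c ^ 2 - 4 * d)"
      unfolding mem_quad_Iso_iff[OF regular] by blast
    with w show "w \<in> {w. w dvd 1 \<and> a ^ 2 - 4 * b = w ^ 2 * (c ^ 2 - 4 * d)}"
      by simp
  next
    fix w
    assume "w \<in> {w. w dvd 1 \<and> a ^ 2 - 4 * b = w ^ 2 * (c ^ 2 - 4 * d)}"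
    then have unit: "w dvd 1" and discr: "a ^ 2 - 4 * b = w ^ 2 * (c ^ 2 - 4 * d)"
      by auto
    obtain s where "c * w - a = 2 * s"
      using two_dvd_of_discriminant_eq[OF prime_or_unit discr] by (rule dvdE)
    then have "quad_map s w \<in> quad_Iso a b c d"
      unfolding mem_quad_Iso_iff[OF regular] using unit discr
      by (intro exI[of _ s] exI[of _ w]) simp
    then show "w \<in> (\<lambda>f. snd (f (0, 1))) ` quad_Iso a b c d"
      by (rule rev_image_eqI) simp
  qed
qed

theorem mainTheorem10:
  fixes \<phi> :: "'s::comm_ring_1 \<Rightarrow> 'r::comm_ring_1" and a b c d :: 's
  assumes hom: "is_ring_hom \<phi>"
    and regular: "\<forall>r::'r. 2 * r = 0 \<longrightarrow> r = 0"
    and prime_or_unit: "prime_elem (2::'r) \<or> (2::'r) dvd 1"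
  shows "(\<exists>F. bij_betw F (quad_Iso (\<phi> a) (\<phi> b) (\<phi> c) (\<phi> d))
               {w::'r. w dvd 1 \<and> \<phi> a ^ 2 - 4 * \<phi> b = w ^ 2 * (\<phi> c ^ 2 - 4 * \<phi> d)})
       \<and> (quad_Iso (\<phi> a) (\<phi> b) (\<phi> c) (\<phi> d) \<noteq> {} \<longleftrightarrow>
          (\<exists>w::'r. w dvd 1 \<and> \<phi> a ^ 2 - 4 * \<phi> b = w ^ 2 * (\<phi> c ^ 2 - 4 * \<phi> d)))"
proof -
  note bij = bij_betw_quad_Iso_discriminant_units[OF regular prime_or_unit,
      of "\<phi> a" "\<phi> b" "\<phi> c" "\<phi> d"]
  have "quad_Iso (\<phi> a) (\<phi> b) (\<phi> c) (\<phi> d) \<noteq> {} \<longleftrightarrow>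
          {w::'r. w dvd 1 \<and> \<phi> a ^ 2 - 4 * \<phi> b = w ^ 2 * (\<phi> c ^ 2 - 4 * \<phi> d)} \<noteq> {}"
    unfolding bij_betw_imp_surj_on[OF bij, symmetric] by simp
  then show ?thesis
    by (intro conjI exI[of _ "\<lambda>f. snd (f (0, 1))"] bij) simp
qed

end
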